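(* Let $G$ be a domino-free bipartite graph with no universal vertex, and let $\mathbf{H}(G)$ be the transitive reduction of $(\mathcal{B}(G),\preceq)$. Then every cycle of (the underlying undirected graph of) $\mathbf{H}(G)$ that does not contain $\bot$ or $\top$ has at least six non-flow-nodes.
   Context: A domino is $C_6$ plus a chord between two antipodal vertices; domino-free means no induced domino. With color classes $X,Y$, a biclique is a vertex set inducing a complete bipartite subgraph, with shores $X(B)=B\cap X$, $Y(B)=B\cap Y$; $\mathcal{B}(G)$ is the set of inclusion-wise maximal bicliques ordered by $B\preceq B'\iff X(B)\subseteq X(B')$. $\bot,\top$ are the added bottom and top elements of the Galois lattice $\mathcal{B}(G)\cup\{\bot,\top\}$. The transitive reduction has an arc $B\to B'$ iff $B'$ covers $B$. For a cycle $C$ in a directed graph (a cycle in the underlying undirected graph), a node of $C$ is a flow-node if of its two arcs in $C$ one enters and one leaves it; otherwise (both enter or both leave) it is a non-flow-node (a sink or source of $C$). A universal vertex is adjacent to all vertices of the opposite color class. *)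

theory Defs
  imports Main
begin

definition bipartite_graph :: "'a set \<Rightarrow> 'a set \<Rightarrow> ('a \<Rightarrow> 'a \<Rightarrow> bool) \<Rightarrow> bool" where
  "bipartite_graph X Y E \<longleftrightarrow> finite X \<and> finite Y \<and> X \<inter> Y = {} \<and>
     (\<forall>u v. E u v \<longleftrightarrow> E v u) \<and>
     (\<forall>u v. E u v \<longrightarrow> (u \<in> X \<and> v \<in> Y) \<or> (u \<in> Y \<and> v \<in> X))"

definition domino_edge :: "nat \<Rightarrow> nat \<Rightarrow> bool" where
  "domino_edge i j \<longleftrightarrow> i < 6 \<and> j < 6 \<and>
     (j = (i + 1) mod 6 \<or> i = (j + 1) mod 6 \<or> {i, j} = {0, 3})"

definition domino_free :: "'a set \<Rightarrow> ('a \<Rightarrow> 'a \<Rightarrow> bool) \<Rightarrow> bool" where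
  "domino_free V E \<longleftrightarrow> \<not> (\<exists>f. inj_on f {0..<6} \<and> f ` {0..<6} \<subseteq> V \<and>
      (\<forall>i<6. \<forall>j<6. E (f i) (f j) \<longleftrightarrow> domino_edge i j))"

definition universal_vertex :: "'a set \<Rightarrow> 'a set \<Rightarrow> ('a \<Rightarrow> 'a \<Rightarrow> bool) \<Rightarrow> 'a \<Rightarrow> bool" where
  "universal_vertex X Y E v \<longleftrightarrow> (v \<in> X \<and> (\<forall>y\<in>Y. E v y)) \<or> (v \<in> Y \<and> (\<forall>x\<in>X. E x v))"

definition biclique :: "'a set \<Rightarrow> 'a set \<Rightarrow> ('a \<Rightarrow> 'a \<Rightarrow> bool) \<Rightarrow> 'a set \<Rightarrow> bool" where
  "biclique X Y E B \<longleftrightarrow> B \<subseteq> X \<union> Y \<and> B \<inter> X \<noteq> {} \<and> B \<inter> Y \<noteq> {} \<and>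
     (\<forall>x\<in>B \<inter> X. \<forall>y\<in>B \<inter> Y. E x y)"

definition max_bicliques :: "'a set \<Rightarrow> 'a set \<Rightarrow> ('a \<Rightarrow> 'a \<Rightarrow> bool) \<Rightarrow> 'a set set" where
  "max_bicliques X Y E = {B. biclique X Y E B \<and> (\<forall>B'. biclique X Y E B' \<and> B \<subseteq> B' \<longrightarrow> B' = B)}"

definition biclique_le :: "'a set \<Rightarrow> 'a set \<Rightarrow> 'a set \<Rightarrow> bool" where
  "biclique_le X B B' \<longleftrightarrow> B \<inter> X \<subseteq> B' \<inter> X"

definition hasse_arc :: "'a set \<Rightarrow> 'a set \<Rightarrow> ('a \<Rightarrow> 'a \<Rightarrow> bool) \<Rightarrow> 'a set \<Rightarrow> 'a set \<Rightarrow> bool" where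
  "hasse_arc X Y E B B' \<longleftrightarrow> B \<in> max_bicliques X Y E \<and> B' \<in> max_bicliques X Y E \<and>
     biclique_le X B B' \<and> B \<noteq> B' \<and>
     \<not> (\<exists>C\<in>max_bicliques X Y E. C \<noteq> B \<and> C \<noteq> B' \<and> biclique_le X B C \<and> biclique_le X C B')"

definition ucycle :: "('n \<Rightarrow> 'n \<Rightarrow> bool) \<Rightarrow> 'n list \<Rightarrow> bool" where
  "ucycle A cs \<longleftrightarrow> length cs \<ge> 3 \<and> distinct cs \<and>
     (\<forall>i < length cs. A (cs ! i) (cs ! ((i + 1) mod length cs)) \<or>
                      A (cs ! ((i + 1) mod length cs)) (cs ! i))"

definition non_flow_node :: "('n \<Rightarrow> 'n \<Rightarrow> bool) \<Rightarrow> 'n list \<Rightarrow> nat \<Rightarrow> bool" where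
  "non_flow_node A cs i \<longleftrightarrow>
     (let k = length cs; c = cs ! i; p = cs ! ((i + k - 1) mod k); n = cs ! ((i + 1) mod k)
      in (A p c \<and> A n c) \<or> (A c p \<and> A c n))"

definition num_non_flow :: "('n \<Rightarrow> 'n \<Rightarrow> bool) \<Rightarrow> 'n list \<Rightarrow> nat" where
  "num_non_flow A cs = card {i. i < length cs \<and> non_flow_node A cs i}"

end

theory Submission
  imports Defs
begin

text \<open>
  Arcs of the Hasse diagram strictly enlarge X-shores, so on a cycle the non-flow nodes are
  exactly the local minima (sources) and the local maxima (sinks); exchanging the colour
  classes reverses every arc, so it suffices to find three sources.

  By domino-freeness, two maximal bicliques sharing an X-vertex and a Y-vertex are comparable.
  Hence distinct lower covers of a node have disjoint X-shores and, dually, distinct upper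
  covers have disjoint Y-shores. A cycle with a single source m and a single sink t is then
  impossible: the X-shore of m lies in both cycle neighbours of t. If there are exactly two
  sources m, s and two sinks t, t', pick x, x', y, y' in the X-shores of m, s and the Y-shores
  of t, t'. They span a biclique, contained in a maximal biclique B. Every node of the cycle
  contains one of x, x' and one of y, y', so it is comparable with B; the disjointness
  properties put m strictly below B and t strictly above it. No arc jumps over B, so the cycle
  passes through B both on its ascent from m to t and on its descent from t back to m.
\<close>

subsection \<open>Walking through intervals of natural numbers\<close>

lemma mod_neq_if_less_less_add:
  fixes a b k :: nat
  assumes "a < b" "b < a + k"
  shows "a mod k \<noteq> b mod k"
proof
  assume "a mod k = b mod k"
  then have "k dvd b - a"
    using mod_eq_dvd_iff_nat[of a b k] assms(1) by simp
  then show False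
    using assms dvd_imp_le[of k "b - a"] by linarith
qed

lemma first_failure_cases:
  fixes P :: "nat \<Rightarrow> bool"
  obtains (holds) "\<And>j. a \<le> j \<Longrightarrow> j < b \<Longrightarrow> P j"
  | (fails) t where "a \<le> t" "t < b" "\<not> P t" "\<And>j. a \<le> j \<Longrightarrow> j < t \<Longrightarrow> P j"
proof (cases "\<exists>j. a \<le> j \<and> j < b \<and> \<not> P j")
  case True
  define t where "t = (LEAST j. a \<le> j \<and> j < b \<and> \<not> P j)"
  have "a \<le> t \<and> t < b \<and> \<not> P t"
    unfolding t_def using True by (rule LeastI_ex)
  moreover have "P j" if "a \<le> j" "j < t" for j
    using not_less_Least[of j "\<lambda>j. a \<le> j \<and> j < b \<and> \<not> P j"] that calculation
    unfolding t_def by auto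
  ultimately show ?thesis using fails by blast
qed (use holds in blast)

lemma transitive_stepwise_interval:
  assumes refl: "\<And>x. r x x" and trans: "\<And>x y z. r x y \<Longrightarrow> r y z \<Longrightarrow> r x z"
    and steps: "\<And>j. a \<le> j \<Longrightarrow> j < b \<Longrightarrow> r (f j) (f (Suc j))"
    and "a \<le> i" "i \<le> j" "j \<le> b"
  shows "r (f i) (f j)"
  using \<open>i \<le> j\<close> \<open>j \<le> b\<close>
proof (induction j rule: dec_induct)
  case base
  show ?case by (rule refl)
next
  case (step j)
  then show ?case using steps[of j] \<open>a \<le> i\<close> trans by simp
qed

lemma sequence_meets_between:
  assumes "P (f a)" "Q (f b)" "\<not> P (f b)" "a \<le> b"
    and trichotomy: "\<And>j. a \<le> j \<Longrightarrow> j \<le> b \<Longrightarrow> P (f j) \<or> Q (f j) \<or> f j = z"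
    and no_jump: "\<And>j. a \<le> j \<Longrightarrow> j < b \<Longrightarrow> \<not> (P (f j) \<and> Q (f (Suc j)))"
    and "\<not> Q z"
  shows "\<exists>j. a < j \<and> j < b \<and> f j = z"
proof (cases a "Suc b" "\<lambda>j. P (f j)" rule: first_failure_cases)
  case holds
  then show ?thesis using assms by blast
next
  case (fails t)
  then have "t \<noteq> a" using \<open>P (f a)\<close> by blast
  then have "a \<le> t - 1" "P (f (t - 1))" "Suc (t - 1) = t"
    using fails by auto
  then have "\<not> Q (f t)" using no_jump[of "t - 1"] fails by auto
  then have "f t = z" using trichotomy[of t] fails by auto
  with \<open>\<not> Q z\<close> \<open>Q (f b)\<close> have "t \<noteq> b" by blast
  with fails \<open>t \<noteq> a\<close> \<open>f t = z\<close> show ?thesis by (intro exI[of _ t]) auto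
qed

subsection \<open>Maximal bicliques\<close>

lemma bipartite_graphD:
  assumes "bipartite_graph X Y E"
  shows "finite X" "finite Y" "X \<inter> Y = {}" "E u v \<longleftrightarrow> E v u"
    "E u v \<Longrightarrow> (u \<in> X \<and> v \<in> Y) \<or> (u \<in> Y \<and> v \<in> X)"
  using assms unfolding bipartite_graph_def by blast+

lemma bipartite_graph_swap: "bipartite_graph X Y E \<Longrightarrow> bipartite_graph Y X E"
  unfolding bipartite_graph_def by blast

lemma max_bicliquesD:
  assumes "B \<in> max_bicliques X Y E"
  shows "biclique X Y E B" "biclique X Y E B' \<Longrightarrow> B \<subseteq> B' \<Longrightarrow> B' = B"
  using assms unfolding max_bicliques_def by auto

lemma max_biclique_X_shore_nonempty: "B \<in> max_bicliques X Y E \<Longrightarrow> \<exists>x. x \<in> B \<inter> X"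
  and max_biclique_Y_shore_nonempty: "B \<in> max_bicliques X Y E \<Longrightarrow> \<exists>y. y \<in> B \<inter> Y"
  using max_bicliquesD(1) unfolding biclique_def by blast+

lemma max_biclique_edge:
  "B \<in> max_bicliques X Y E \<Longrightarrow> x \<in> B \<inter> X \<Longrightarrow> y \<in> B \<inter> Y \<Longrightarrow> E x y"
  using max_bicliquesD(1) unfolding biclique_def by blast

lemma max_bicliques_eqI:
  assumes u: "u \<in> max_bicliques X Y E" and v: "v \<in> max_bicliques X Y E" and "u \<inter> X = v \<inter> X"
  shows "u = v"
proof -
  have "biclique X Y E (u \<union> v)"
    using max_bicliquesD(1)[OF u] max_bicliquesD(1)[OF v] assms(3) unfolding biclique_def by blast
  then have "u \<union> v = u" "u \<union> v = v"
    using max_bicliquesD(2) u v by blast+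
  then show ?thesis by blast
qed

lemma max_biclique_Y_shore_antimono:
  assumes "bipartite_graph X Y E" and u: "u \<in> max_bicliques X Y E" and v: "v \<in> max_bicliques X Y E"
    and "biclique_le X u v"
  shows "v \<inter> Y \<subseteq> u \<inter> Y"
proof -
  have "biclique X Y E (u \<union> (v \<inter> Y))"
    using max_bicliquesD(1)[OF u] max_bicliquesD(1)[OF v] assms(4) bipartite_graphD(3)[OF assms(1)]
    unfolding biclique_def biclique_le_def by blast
  then have "u \<union> (v \<inter> Y) = u" using max_bicliquesD(2)[OF u] by blast
  then show ?thesis by blast
qed

lemma max_biclique_non_neighbour:
  assumes "bipartite_graph X Y E" and v: "v \<in> max_bicliques X Y E" and "x \<in> X" "x \<notin> v"
  shows "\<exists>y\<in>v \<inter> Y. \<not> E x y"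
proof (rule ccontr)
  assume "\<not> ?thesis"
  then have "biclique X Y E (insert x v)"
    using max_bicliquesD(1)[OF v] assms(3) bipartite_graphD(3)[OF assms(1)] unfolding biclique_def by blast
  then have "insert x v = v" using max_bicliquesD(2)[OF v] by blast
  then show False using \<open>x \<notin> v\<close> by blast
qed

lemma biclique_extends_to_max_biclique:
  assumes "bipartite_graph X Y E" and "biclique X Y E B"
  obtains B' where "B' \<in> max_bicliques X Y E" "B \<subseteq> B'"
proof -
  let ?S = "{B'. biclique X Y E B' \<and> B \<subseteq> B'}"
  have "?S \<subseteq> Pow (X \<union> Y)" unfolding biclique_def by auto
  then have fin: "finite ?S"
    using bipartite_graphD(1,2)[OF assms(1)] by (meson finite_Pow_iff finite_UnI finite_subset)
  have "?S \<noteq> {}" using assms(2) by auto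
  from finite_has_maximal[OF fin this] obtain M
    where M: "M \<in> ?S" "\<forall>B'\<in>?S. M \<subseteq> B' \<longrightarrow> M = B'"
    by blast
  then have "M \<in> max_bicliques X Y E" unfolding max_bicliques_def by auto
  with M(1) show ?thesis using that by blast
qed

lemma induced_domino_not_domino_free:
  assumes bip: "bipartite_graph X Y E"
    and X: "x \<in> X" "x1 \<in> X" "x2 \<in> X" and Y: "y \<in> Y" "y1 \<in> Y" "y2 \<in> Y"
    and edges: "E x y" "E x y1" "E x y2" "E x1 y1" "E x1 y" "E x2 y" "E x2 y2"
    and non_edges: "\<not> E x1 y2" "\<not> E x2 y1"
  shows "\<not> domino_free (X \<union> Y) E"
proof -
  define f where "f i = [x, y1, x1, y, x2, y2] ! i" for i :: nat
  have edges': "E y x" "E y1 x" "E y2 x" "E y1 x1" "E y x1" "E y x2" "E y2 x2"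
    and non_edges': "\<not> E y2 x1" "\<not> E y1 x2"
    using edges non_edges bipartite_graphD(4)[OF bip] by blast+
  have no_edge_XX: "\<not> E u v" if "u \<in> X" "v \<in> X" for u v
    using bipartite_graphD(3,5)[OF bip] that by blast
  have no_edge_YY: "\<not> E u v" if "u \<in> Y" "v \<in> Y" for u v
    using bipartite_graphD(3,5)[OF bip] that by blast
  have list: "map f [0..<6] = [x, y1, x1, y, x2, y2]" by (simp add: f_def upt_rec)
  have "x \<noteq> x1" "x \<noteq> x2" "x1 \<noteq> x2" "y \<noteq> y1" "y \<noteq> y2" "y1 \<noteq> y2"
    using edges non_edges by metis+
  moreover have "u \<noteq> v" if "u \<in> X" "v \<in> Y" for u v
    using bipartite_graphD(3)[OF bip] that by blast
  ultimately have "distinct [x, y1, x1, y, x2, y2]"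
    using X Y by (simp; metis)
  then have "inj_on f {0..<6}" using list distinct_map[of f "[0..<6]"] by simp
  moreover have "f ` {0..<6} = set [x, y1, x1, y, x2, y2]"
    by (metis list set_map set_upt)
  then have "f ` {0..<6} \<subseteq> X \<union> Y"
    using X Y by simp
  moreover have "E (f i) (f j) \<longleftrightarrow> domino_edge i j" if "i < 6" "j < 6" for i j
  proof -
    have "i = 0 \<or> i = 1 \<or> i = 2 \<or> i = 3 \<or> i = 4 \<or> i = 5"
      "j = 0 \<or> j = 1 \<or> j = 2 \<or> j = 3 \<or> j = 4 \<or> j = 5"
      using that by auto
    then show ?thesis
      unfolding domino_edge_def f_def
      by (elim disjE) (simp_all add: doubleton_eq_iff X Y edges non_edges edges' non_edges' no_edge_XX no_edge_YY)
  qed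
  ultimately show ?thesis unfolding domino_free_def by blast
qed

lemma max_bicliques_comparable:
  assumes bip: "bipartite_graph X Y E" and df: "domino_free (X \<union> Y) E"
    and u: "u \<in> max_bicliques X Y E" and v: "v \<in> max_bicliques X Y E"
    and x: "x \<in> u \<inter> v \<inter> X" and y: "y \<in> u \<inter> v \<inter> Y"
  shows "biclique_le X u v \<or> biclique_le X v u"
proof (rule ccontr)
  assume "\<not> ?thesis"
  then obtain x1 x2 where x1: "x1 \<in> u \<inter> X" "x1 \<notin> v" and x2: "x2 \<in> v \<inter> X" "x2 \<notin> u"
    unfolding biclique_le_def by blast
  obtain y2 where y2: "y2 \<in> v \<inter> Y" "\<not> E x1 y2"
    using max_biclique_non_neighbour[OF bip v] x1 by blast
  obtain y1 where y1: "y1 \<in> u \<inter> Y" "\<not> E x2 y1"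
    using max_biclique_non_neighbour[OF bip u] x2 by blast
  have "E x y" "E x y1" "E x1 y1" "E x1 y"
    using max_biclique_edge[OF u] x y x1 y1 by blast+
  moreover have "E x y2" "E x2 y" "E x2 y2"
    using max_biclique_edge[OF v] x y x2 y2 by blast+
  ultimately have "\<not> domino_free (X \<union> Y) E"
    using induced_domino_not_domino_free[OF bip] x y x1 x2 y1 y2 by blast
  with df show False by contradiction
qed

subsection \<open>The cover relation\<close>

lemma hasse_arcD:
  assumes "hasse_arc X Y E u v"
  shows "u \<in> max_bicliques X Y E" "v \<in> max_bicliques X Y E" "biclique_le X u v" "u \<noteq> v"
    "C \<in> max_bicliques X Y E \<Longrightarrow> biclique_le X u C \<Longrightarrow> biclique_le X C v \<Longrightarrow> C = u \<or> C = v"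
  using assms unfolding hasse_arc_def by blast+

lemma hasse_arc_conversep:
  assumes bip: "bipartite_graph X Y E"
  shows "(hasse_arc X Y E)\<inverse>\<inverse> = hasse_arc Y X E"
proof -
  have "biclique Y X E B = biclique X Y E B" for B
    using bipartite_graphD(4)[OF bip] unfolding biclique_def by blast
  then have mb: "max_bicliques Y X E = max_bicliques X Y E"
    unfolding max_bicliques_def by simp
  have "biclique_le Y u v = biclique_le X v u"
    if "u \<in> max_bicliques X Y E" "v \<in> max_bicliques X Y E" for u v
    using max_biclique_Y_shore_antimono[OF bip, of v u]
      max_biclique_Y_shore_antimono[OF bipartite_graph_swap[OF bip], of u v] mb that
    unfolding biclique_le_def by blast
  then show ?thesis unfolding hasse_arc_def mb by (intro ext) auto
qed

context
  fixes X Y :: "'a set" and E :: "'a \<Rightarrow> 'a \<Rightarrow> bool"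
  assumes bip: "bipartite_graph X Y E"
begin

lemma hasse_arc_card_less:
  assumes "hasse_arc X Y E u v"
  shows "card (u \<inter> X) < card (v \<inter> X)"
proof (rule psubset_card_mono)
  show "finite (v \<inter> X)" using bipartite_graphD(1)[OF bip] by simp
  have "u \<inter> X \<noteq> v \<inter> X"
    using max_bicliques_eqI hasse_arcD(1,2,4)[OF assms] by blast
  then show "u \<inter> X \<subset> v \<inter> X"
    using hasse_arcD(3)[OF assms] unfolding biclique_le_def by blast
qed

lemma hasse_arc_Y_shore_antimono: "hasse_arc X Y E u v \<Longrightarrow> v \<inter> Y \<subseteq> u \<inter> Y"
  using max_biclique_Y_shore_antimono[OF bip] hasse_arcD by blast

lemma hasse_arc_asym: "hasse_arc X Y E u v \<Longrightarrow> \<not> hasse_arc X Y E v u"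
  using hasse_arc_card_less[of u v] hasse_arc_card_less[of v u] by linarith

lemma hasse_arc_not_across:
  assumes "hasse_arc X Y E u v \<or> hasse_arc X Y E v u" and "B \<in> max_bicliques X Y E"
    and "biclique_le X u B" "u \<noteq> B" "biclique_le X B v" "v \<noteq> B"
  shows False
  using assms(1)
proof
  assume "hasse_arc X Y E u v"
  then show False using hasse_arcD(5) assms(2-) by blast
next
  assume vu: "hasse_arc X Y E v u"
  then have "u \<inter> X = B \<inter> X"
    using assms(3,5) hasse_arcD(3) unfolding biclique_le_def by blast
  then show False
    using max_bicliques_eqI[of u X Y E B] hasse_arcD(2)[OF vu] assms(2,4) by blast
qed

end

lemma hasse_arc_lower_covers_disjoint:
  assumes bip: "bipartite_graph X Y E" and df: "domino_free (X \<union> Y) E"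
    and a: "hasse_arc X Y E a M" and b: "hasse_arc X Y E b M" and "a \<noteq> b"
  shows "a \<inter> b \<inter> X = {}"
proof (rule ccontr)
  assume "a \<inter> b \<inter> X \<noteq> {}"
  then obtain x where x: "x \<in> a \<inter> b \<inter> X" by blast
  obtain y where "y \<in> M \<inter> Y"
    using max_biclique_Y_shore_nonempty[OF hasse_arcD(2)[OF a]] by blast
  then have y: "y \<in> a \<inter> b \<inter> Y"
    using hasse_arc_Y_shore_antimono[OF bip] a b by blast
  have "biclique_le X a b \<or> biclique_le X b a"
    using max_bicliques_comparable[OF bip df hasse_arcD(1)[OF a] hasse_arcD(1)[OF b] x y] .
  then show False
    using hasse_arcD(1,3,4,5)[OF a] hasse_arcD(1,3,4,5)[OF b] \<open>a \<noteq> b\<close> by metis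
qed

lemma hasse_arc_upper_covers_disjoint:
  assumes bip: "bipartite_graph X Y E" and df: "domino_free (X \<union> Y) E"
    and "hasse_arc X Y E M a" "hasse_arc X Y E M b" "a \<noteq> b"
  shows "a \<inter> b \<inter> Y = {}"
proof -
  have "hasse_arc Y X E a M" "hasse_arc Y X E b M"
    using assms(3,4) hasse_arc_conversep[OF bip] by (metis conversep_iff)+
  moreover have "domino_free (Y \<union> X) E" using df by (simp add: Un_commute)
  ultimately show ?thesis
    using hasse_arc_lower_covers_disjoint[OF bipartite_graph_swap[OF bip]] \<open>a \<noteq> b\<close> by blast
qed

subsection \<open>Sources and sinks of a cycle\<close>

definition cycle_sources :: "('n \<Rightarrow> 'n \<Rightarrow> bool) \<Rightarrow> 'n list \<Rightarrow> nat set" where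
  "cycle_sources A cs = {i. i < length cs \<and>
     A (cs ! i) (cs ! ((i + length cs - 1) mod length cs)) \<and> A (cs ! i) (cs ! ((i + 1) mod length cs))}"

lemma ucycle_conversep: "ucycle A\<inverse>\<inverse> cs = ucycle A cs"
  unfolding ucycle_def by auto

lemma card_sources_add_sinks_le_num_non_flow:
  assumes asym: "\<And>u v. A u v \<Longrightarrow> \<not> A v u"
  shows "card (cycle_sources A cs) + card (cycle_sources A\<inverse>\<inverse> cs) \<le> num_non_flow A cs"
proof -
  have "cycle_sources A cs \<inter> cycle_sources A\<inverse>\<inverse> cs = {}"
    unfolding cycle_sources_def using asym by auto
  then have "card (cycle_sources A cs) + card (cycle_sources A\<inverse>\<inverse> cs)
      = card (cycle_sources A cs \<union> cycle_sources A\<inverse>\<inverse> cs)"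
    by (intro card_Un_disjoint[symmetric]) (simp_all add: cycle_sources_def)
  also have "\<dots> \<le> card {i. i < length cs \<and> non_flow_node A cs i}"
    by (intro card_mono) (auto simp: cycle_sources_def non_flow_node_def Let_def)
  finally show ?thesis unfolding num_non_flow_def .
qed

subsection \<open>Cycles in the Hasse diagram\<close>

locale hasse_cycle =
  fixes X Y :: "'a set" and E :: "'a \<Rightarrow> 'a \<Rightarrow> bool" and cs :: "'a set list"
  assumes bip: "bipartite_graph X Y E" and df: "domino_free (X \<union> Y) E"
    and cycle: "ucycle (hasse_arc X Y E) cs"
begin

abbreviation arc :: "'a set \<Rightarrow> 'a set \<Rightarrow> bool" where "arc \<equiv> hasse_arc X Y E"
abbreviation len :: nat where "len \<equiv> length cs"

definition node :: "nat \<Rightarrow> 'a set" where "node i = cs ! (i mod len)"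

abbreviation ascends :: "nat \<Rightarrow> bool" where "ascends j \<equiv> arc (node j) (node (Suc j))"

lemma len_ge_3: "3 \<le> len"
  using cycle unfolding ucycle_def by blast

lemma len_pos: "0 < len"
  using len_ge_3 by linarith

lemma node_add_len [simp]: "node (i + len) = node i"
  unfolding node_def by simp

lemma node_Suc_add_len [simp]: "node (Suc (i + len)) = node (Suc i)"
  using node_add_len[of "Suc i"] by simp

lemma node_step: "ascends j \<or> arc (node (Suc j)) (node j)"
proof -
  have "j mod len < len" using len_pos by simp
  moreover have "(j mod len + 1) mod len = Suc j mod len" by (simp add: mod_Suc_eq)
  ultimately show ?thesis using cycle unfolding ucycle_def node_def by metis
qed

lemma descends: "\<not> ascends j \<Longrightarrow> arc (node (Suc j)) (node j)"
  using node_step by blast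

lemma node_max_biclique: "node i \<in> max_bicliques X Y E"
  using node_step[of i] hasse_arcD by blast

lemma node_neq: "i < j \<Longrightarrow> j < i + len \<Longrightarrow> node i \<noteq> node j"
  using cycle mod_neq_if_less_less_add[of i j len] len_pos
  unfolding ucycle_def node_def by (simp add: nth_eq_iff_index_eq)

lemma ascending_run:
  assumes "\<And>j. a \<le> j \<Longrightarrow> j < b \<Longrightarrow> ascends j" "a \<le> i" "i \<le> j" "j \<le> b"
  shows "biclique_le X (node i) (node j)"
proof (rule transitive_stepwise_interval[where r = "biclique_le X"])
  show "biclique_le X (node j) (node (Suc j))" if "a \<le> j" "j < b" for j
    using hasse_arcD(3) assms(1) that by blast
qed (use assms(2-) in \<open>auto simp: biclique_le_def\<close>)

lemma descending_run:
  assumes "\<And>j. a \<le> j \<Longrightarrow> j < b \<Longrightarrow> \<not> ascends j" "a \<le> i" "i \<le> j" "j \<le> b"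
  shows "biclique_le X (node j) (node i)"
proof (rule transitive_stepwise_interval[where r = "\<lambda>u v. biclique_le X v u"])
  show "biclique_le X (node (Suc j)) (node j)" if "a \<le> j" "j < b" for j
    using hasse_arcD(3)[OF descends] assms(1) that by blast
qed (use assms(2-) in \<open>auto simp: biclique_le_def\<close>)

lemma node_in_cycle_sources:
  assumes "0 < p" "\<not> ascends (p - 1)" "ascends p"
  shows "p mod len \<in> cycle_sources arc cs"
proof -
  have "(p mod len + len - 1) mod len = (p - 1) mod len"
  proof -
    have "p mod len + len - 1 = p mod len + (len - 1)" using len_ge_3 by simp
    then have "(p mod len + len - 1) mod len = (p + (len - 1)) mod len" by (simp add: mod_add_left_eq)
    also have "p + (len - 1) = (p - 1) + len" using assms(1) len_ge_3 by simp
    finally show ?thesis by simp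
  qed
  moreover have "(p mod len + 1) mod len = Suc p mod len" by (simp add: mod_Suc_eq)
  moreover have "arc (node p) (node (p - 1))" using descends[OF assms(2)] assms(1) by simp
  ultimately show ?thesis
    using assms(3) len_pos unfolding cycle_sources_def node_def by simp
qed

lemma peak_X_disjoint:
  assumes "0 < t" "ascends (t - 1)" "\<not> ascends t"
  shows "node (t - 1) \<inter> node (Suc t) \<inter> X = {}"
proof (rule hasse_arc_lower_covers_disjoint[OF bip df])
  show "arc (node (t - 1)) (node t)" using assms(1,2) by simp
  show "arc (node (Suc t)) (node t)" using descends[OF assms(3)] .
  show "node (t - 1) \<noteq> node (Suc t)" using node_neq len_ge_3 assms(1) by simp
qed

lemma valley_Y_disjoint:
  assumes "0 < s" "\<not> ascends (s - 1)" "ascends s"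
  shows "node (s - 1) \<inter> node (Suc s) \<inter> Y = {}"
proof (rule hasse_arc_upper_covers_disjoint[OF bip df])
  show "arc (node s) (node (s - 1))" using descends[OF assms(2)] assms(1) by simp
  show "arc (node s) (node (Suc s))" using assms(3) .
  show "node (s - 1) \<noteq> node (Suc s)" using node_neq len_ge_3 assms(1) by simp
qed

text \<open>A node whose X-shore has least cardinality is a source.\<close>
lemma source_exists:
  obtains m where "ascends m" "\<not> ascends (m + len - 1)"
proof -
  obtain m where m: "\<And>i. card (node m \<inter> X) \<le> card (node i \<inter> X)"
    using ex_has_least_nat[of "\<lambda>_. True" 0 "\<lambda>i. card (node i \<inter> X)"] by blast
  have "ascends m"
    using descends hasse_arc_card_less[OF bip] m[of "Suc m"] not_le by blast
  moreover have "\<not> arc (node (m + len - 1)) (node (m + len))"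
    using hasse_arc_card_less[OF bip] m[of "m + len - 1"] not_le by force
  then have "\<not> ascends (m + len - 1)"
    using len_pos by (metis Suc_diff_1 add_gr_0)
  ultimately show ?thesis using that by blast
qed

lemma source_in_cycle_sources:
  assumes "ascends m" "\<not> ascends (m + len - 1)"
  shows "m mod len \<in> cycle_sources arc cs"
  using node_in_cycle_sources[of "m + len"] assms len_pos by simp

lemma no_single_peak:
  assumes "m < t" "t < m + len"
    and up: "\<And>j. m \<le> j \<Longrightarrow> j < t \<Longrightarrow> ascends j"
    and down: "\<And>j. t \<le> j \<Longrightarrow> j < m + len \<Longrightarrow> \<not> ascends j"
  shows False
proof -
  obtain x where x: "x \<in> node m \<inter> X"
    using max_biclique_X_shore_nonempty[OF node_max_biclique] by blast
  have "biclique_le X (node m) (node (t - 1))"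
    using ascending_run[of m t m "t - 1"] up assms(1) by simp
  moreover have "biclique_le X (node (m + len)) (node (Suc t))"
    using descending_run[of t "m + len" "Suc t" "m + len"] down assms(2) by simp
  ultimately have "x \<in> node (t - 1) \<inter> node (Suc t) \<inter> X"
    using x unfolding biclique_le_def by auto
  moreover have "ascends (t - 1)" using up[of "t - 1"] assms(1) by simp
  ultimately show False
    using peak_X_disjoint[of t] down[of t] assms(1,2) by blast
qed

lemma node_passes_through:
  assumes B: "B \<in> max_bicliques X Y E" and "a \<le> b"
    and comparable: "\<And>j. a \<le> j \<Longrightarrow> j \<le> b \<Longrightarrow> biclique_le X (node j) B \<or> biclique_le X B (node j)"
    and "node a \<noteq> B" "node b \<noteq> B"
    and ends: "biclique_le X (node a) B \<and> biclique_le X B (node b) \<or>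
      biclique_le X B (node a) \<and> biclique_le X (node b) B"
  shows "\<exists>j. a < j \<and> j < b \<and> node j = B"
proof -
  define below where "below u \<longleftrightarrow> biclique_le X u B \<and> u \<noteq> B" for u
  define above where "above u \<longleftrightarrow> biclique_le X B u \<and> u \<noteq> B" for u
  have trichotomy: "below (node j) \<or> above (node j) \<or> node j = B" if "a \<le> j" "j \<le> b" for j
    using comparable[OF that] unfolding below_def above_def by blast
  have no_jump: "\<not> (below (node j) \<and> above (node (Suc j)))" "\<not> (above (node j) \<and> below (node (Suc j)))"
    for j
  proof -
    have "arc (node j) (node (Suc j)) \<or> arc (node (Suc j)) (node j)"
      "arc (node (Suc j)) (node j) \<or> arc (node j) (node (Suc j))"
      using node_step[of j] by blast+
    from this[THEN hasse_arc_not_across[OF bip _ B]]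
    show "\<not> (below (node j) \<and> above (node (Suc j)))" "\<not> (above (node j) \<and> below (node (Suc j)))"
      unfolding below_def above_def by blast+
  qed
  have exclusive: "\<not> (below u \<and> above u)" if "u \<in> max_bicliques X Y E" for u
    using max_bicliques_eqI[OF that B] unfolding below_def above_def biclique_le_def
    by (simp add: subset_antisym)
  have "below (node a) \<and> above (node b) \<or> above (node a) \<and> below (node b)"
    using ends \<open>node a \<noteq> B\<close> \<open>node b \<noteq> B\<close> unfolding below_def above_def by blast
  then show ?thesis
  proof
    assume "below (node a) \<and> above (node b)"
    with exclusive[OF node_max_biclique] show ?thesis
      by (intro sequence_meets_between[of below node a above b])
        (use \<open>a \<le> b\<close> trichotomy no_jump(1) in \<open>auto simp: above_def\<close>)
  next
    assume "above (node a) \<and> below (node b)"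
    with exclusive[OF node_max_biclique] show ?thesis
      by (intro sequence_meets_between[of above node a below b])
        (use \<open>a \<le> b\<close> trichotomy no_jump(2) in \<open>auto simp: below_def\<close>)
  qed
qed

context
  fixes m t1 s1 t2 :: nat
  assumes order: "m < t1" "t1 < s1" "s1 < t2" "t2 < m + len"
    and up1: "\<And>j. m \<le> j \<Longrightarrow> j < t1 \<Longrightarrow> ascends j"
    and down1: "\<And>j. t1 \<le> j \<Longrightarrow> j < s1 \<Longrightarrow> \<not> ascends j"
    and up2: "\<And>j. s1 \<le> j \<Longrightarrow> j < t2 \<Longrightarrow> ascends j"
    and down2: "\<And>j. t2 \<le> j \<Longrightarrow> j < m + len \<Longrightarrow> \<not> ascends j"
begin

lemma double_peak_sandwich:
  assumes "m \<le> j" "j \<le> m + len"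
  shows "\<exists>lo\<in>{m, s1}. \<exists>hi\<in>{t1, t2}. biclique_le X (node lo) (node j) \<and> biclique_le X (node j) (node hi)"
proof -
  consider "j \<le> t1" | "t1 \<le> j" "j \<le> s1" | "s1 \<le> j" "j \<le> t2" | "t2 \<le> j"
    by linarith
  then show ?thesis
  proof cases
    case 1
    then show ?thesis using ascending_run[of m t1] up1 assms order by blast
  next
    case 2
    then show ?thesis using descending_run[of t1 s1] down1 by blast
  next
    case 3
    then show ?thesis using ascending_run[of s1 t2] up2 by blast
  next
    case 4
    then have "biclique_le X (node (m + len)) (node j) \<and> biclique_le X (node j) (node t2)"
      using descending_run[of t2 "m + len"] down2 assms by blast
    then show ?thesis by auto
  qed
qed

lemma double_peak_minima_disjoint: "node m \<inter> node s1 \<inter> X = {}"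
proof -
  have "biclique_le X (node m) (node (t1 - 1))"
    using ascending_run[of m t1 m "t1 - 1"] up1 order by simp
  moreover have "biclique_le X (node s1) (node (Suc t1))"
    using descending_run[of t1 s1 "Suc t1" s1] down1 order by simp
  moreover have "node (t1 - 1) \<inter> node (Suc t1) \<inter> X = {}"
    using peak_X_disjoint[of t1] up1[of "t1 - 1"] down1[of t1] order by simp
  ultimately show ?thesis unfolding biclique_le_def by blast
qed

lemma double_peak_maxima_disjoint: "node t1 \<inter> node t2 \<inter> Y = {}"
proof -
  have "biclique_le X (node (Suc m)) (node t1)"
    using ascending_run[of m t1 "Suc m" t1] up1 order by simp
  then have "node t1 \<inter> Y \<subseteq> node (Suc (m + len)) \<inter> Y"
    using max_biclique_Y_shore_antimono[OF bip node_max_biclique node_max_biclique] by simp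
  moreover have "biclique_le X (node (m + len - 1)) (node t2)"
    using descending_run[of t2 "m + len" t2 "m + len - 1"] down2 order by simp
  then have "node t2 \<inter> Y \<subseteq> node (m + len - 1) \<inter> Y"
    using max_biclique_Y_shore_antimono[OF bip node_max_biclique node_max_biclique] by simp
  moreover have "Suc (m + len - 1) = m + len" using order by simp
  then have "node (m + len - 1) \<inter> node (Suc (m + len)) \<inter> Y = {}"
    using valley_Y_disjoint[of "m + len"] down2[of "m + len - 1"] up1[of m] order len_pos by simp
  ultimately show ?thesis by blast
qed

lemma double_peak_minima_below_maxima:
  assumes "lo \<in> {m, s1}" "hi \<in> {t1, t2}"
  shows "biclique_le X (node lo) (node hi)"
proof -
  have "biclique_le X (node m) (node t1)" using ascending_run[of m t1] up1 order by simp
  moreover have "biclique_le X (node s1) (node t1)" using descending_run[of t1 s1] down1 order by simp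
  moreover have "biclique_le X (node s1) (node t2)" using ascending_run[of s1 t2] up2 order by simp
  moreover have "biclique_le X (node (m + len)) (node t2)"
    using descending_run[of t2 "m + len" t2 "m + len"] down2 order by simp
  ultimately show ?thesis using assms by auto
qed

lemma no_double_peak: False
proof -
  obtain x1 x2 y1 y2 where x: "x1 \<in> node m \<inter> X" "x2 \<in> node s1 \<inter> X"
    and y: "y1 \<in> node t1 \<inter> Y" "y2 \<in> node t2 \<inter> Y"
    using max_biclique_X_shore_nonempty[OF node_max_biclique]
      max_biclique_Y_shore_nonempty[OF node_max_biclique] by metis
  have in_maxima: "x \<in> node hi" if "x \<in> {x1, x2}" "hi \<in> {t1, t2}" for x hi
  proof -
    have "node m \<inter> X \<subseteq> node hi" "node s1 \<inter> X \<subseteq> node hi"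
      using double_peak_minima_below_maxima[OF _ that(2)] unfolding biclique_le_def by auto
    then show ?thesis using that(1) x by auto
  qed
  have "E x y" if hx: "x \<in> {x1, x2}" and hy: "y \<in> {y1, y2}" for x y
  proof -
    obtain hi where "hi \<in> {t1, t2}" "y \<in> node hi \<inter> Y" using hy y by blast
    moreover have "x \<in> X" using hx x by blast
    ultimately show ?thesis
      using in_maxima[OF hx] max_biclique_edge[OF node_max_biclique] by blast
  qed
  then have "biclique X Y E {x1, x2, y1, y2}"
    using x y bipartite_graphD(3)[OF bip] unfolding biclique_def by auto
  then obtain B where B: "B \<in> max_bicliques X Y E" "{x1, x2, y1, y2} \<subseteq> B"
    using biclique_extends_to_max_biclique[OF bip] by blast
  have comparable: "biclique_le X (node j) B \<or> biclique_le X B (node j)"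
    if j: "m \<le> j" "j \<le> m + len" for j
  proof -
    obtain lo hi where lo: "lo \<in> {m, s1}" "biclique_le X (node lo) (node j)"
      and hi: "hi \<in> {t1, t2}" "biclique_le X (node j) (node hi)"
      using double_peak_sandwich[OF j] by blast
    obtain x where "x \<in> node lo \<inter> B \<inter> X" using lo(1) x B by blast
    then have x_common: "x \<in> node j \<inter> B \<inter> X" using lo(2) unfolding biclique_le_def by blast
    obtain y where "y \<in> node hi \<inter> B \<inter> Y" using hi(1) y B by blast
    then have y_common: "y \<in> node j \<inter> B \<inter> Y"
      using max_biclique_Y_shore_antimono[OF bip node_max_biclique node_max_biclique hi(2)] by blast
    show ?thesis
      using max_bicliques_comparable[OF bip df node_max_biclique B(1) x_common y_common] .
  qed
  have "x2 \<notin> node m" using double_peak_minima_disjoint x by blast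
  then have m_below: "biclique_le X (node m) B" "node m \<noteq> B"
    using comparable[of m] order B(2) x(2) unfolding biclique_le_def by auto
  have "y2 \<notin> node t1" using double_peak_maxima_disjoint y by blast
  moreover have "biclique_le X (node t1) B \<Longrightarrow> y2 \<in> node t1"
    using max_biclique_Y_shore_antimono[OF bip node_max_biclique B(1), of t1] B(2) y(2) by blast
  ultimately have t1_above: "biclique_le X B (node t1)" "node t1 \<noteq> B"
    using comparable[of t1] order B(2) by auto
  obtain j1 where "m < j1" "j1 < t1" "node j1 = B"
    using node_passes_through[OF B(1), of m t1] comparable m_below t1_above order by auto
  moreover obtain j2 where "t1 < j2" "j2 < m + len" "node j2 = B"
    using node_passes_through[OF B(1), of t1 "m + len"] comparable m_below t1_above order by auto
  ultimately show False using node_neq[of j1 j2] by simp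
qed

end

lemma next_peak:
  assumes "ascends a" "a < b" "\<not> ascends (b - 1)"
  obtains t where "a < t" "t < b" "\<not> ascends t" "\<And>j. a \<le> j \<Longrightarrow> j < t \<Longrightarrow> ascends j"
proof (cases a b ascends rule: first_failure_cases)
  case holds
  moreover have "a \<le> b - 1" "b - 1 < b" using assms(2) by linarith+
  ultimately show ?thesis using assms(3) by (metis Suc_pred' gr_implies_not0 not_gr_zero)
next
  case (fails t)
  with assms(1) have "a < t" by (metis le_neq_implies_less)
  with fails show ?thesis using that by blast
qed

lemma next_valley:
  assumes "\<not> ascends a"
  obtains (descent) "\<And>j. a \<le> j \<Longrightarrow> j < b \<Longrightarrow> \<not> ascends j"
  | (valley) s where "a < s" "s < b" "ascends s" "\<And>j. a \<le> j \<Longrightarrow> j < s \<Longrightarrow> \<not> ascends j"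
      "s mod len \<in> cycle_sources arc cs"
proof (cases a b "\<lambda>j. \<not> ascends j" rule: first_failure_cases)
  case (fails s)
  with assms have "a < s" by (metis le_neq_implies_less)
  moreover have "\<not> ascends (s - 1)" using fails(4)[of "s - 1"] \<open>a < s\<close> by simp
  ultimately have "s mod len \<in> cycle_sources arc cs"
    using node_in_cycle_sources[of s] fails(3) by simp
  with fails \<open>a < s\<close> show ?thesis using valley by blast
qed (use descent in blast)

lemma three_le_card_sources: "3 \<le> card (cycle_sources arc cs)"
proof -
  obtain m where m: "ascends m" "\<not> ascends (m + len - 1)" by (rule source_exists)
  obtain t1 where t1: "m < t1" "t1 < m + len" "\<not> ascends t1"
    and up1: "\<And>j. m \<le> j \<Longrightarrow> j < t1 \<Longrightarrow> ascends j"
    using next_peak[OF m(1) _ m(2)] len_pos by auto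
  obtain s1 where s1: "t1 < s1" "s1 < m + len" "ascends s1" "s1 mod len \<in> cycle_sources arc cs"
    and down1: "\<And>j. t1 \<le> j \<Longrightarrow> j < s1 \<Longrightarrow> \<not> ascends j"
    using next_valley[OF t1(3), of "m + len"] no_single_peak[OF t1(1,2) up1] by metis
  obtain t2 where t2: "s1 < t2" "t2 < m + len" "\<not> ascends t2"
    and up2: "\<And>j. s1 \<le> j \<Longrightarrow> j < t2 \<Longrightarrow> ascends j"
    using next_peak[OF s1(3,2) m(2)] by blast
  obtain s3 where s3: "t2 < s3" "s3 < m + len" "s3 mod len \<in> cycle_sources arc cs"
  proof (rule next_valley[OF t2(3), of "m + len"])
    assume "\<And>j. t2 \<le> j \<Longrightarrow> j < m + len \<Longrightarrow> \<not> ascends j"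
    then show thesis
      using no_double_peak[of m t1 s1 t2] t1(1) s1(1) t2(1,2) up1 down1 up2 by blast
  qed (use that in blast)
  have "card {m mod len, s1 mod len, s3 mod len} = 3"
    using mod_neq_if_less_less_add t1 s1 t2 s3 by auto
  moreover have "{m mod len, s1 mod len, s3 mod len} \<subseteq> cycle_sources arc cs"
    using source_in_cycle_sources[OF m] s1(4) s3(3) by blast
  moreover have "finite (cycle_sources arc cs)" unfolding cycle_sources_def by simp
  ultimately show ?thesis using card_mono by metis
qed

end

theorem lemma2:
  fixes X Y :: "'a set" and E :: "'a \<Rightarrow> 'a \<Rightarrow> bool" and cs :: "'a set list"
  assumes "bipartite_graph X Y E"
    and "domino_free (X \<union> Y) E"
    and "\<forall>v \<in> X \<union> Y. \<not> universal_vertex X Y E v"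
    and "ucycle (hasse_arc X Y E) cs"
  shows "num_non_flow (hasse_arc X Y E) cs \<ge> 6"
proof -
  have converse: "(hasse_arc X Y E)\<inverse>\<inverse> = hasse_arc Y X E"
    using hasse_arc_conversep[OF assms(1)] .
  interpret XY: hasse_cycle X Y E cs
    using assms(1,2,4) by unfold_locales
  interpret YX: hasse_cycle Y X E cs
    using bipartite_graph_swap[OF assms(1)] assms(2,4) ucycle_conversep[of "hasse_arc X Y E" cs]
    by unfold_locales (simp_all add: Un_commute converse)
  have "3 \<le> card (cycle_sources (hasse_arc X Y E) cs)"
    by (rule XY.three_le_card_sources)
  moreover have "3 \<le> card (cycle_sources (hasse_arc X Y E)\<inverse>\<inverse> cs)"
    unfolding converse by (rule YX.three_le_card_sources)
  moreover have "card (cycle_sources (hasse_arc X Y E) cs) + card (cycle_sources (hasse_arc X Y E)\<inverse>\<inverse> cs)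
      \<le> num_non_flow (hasse_arc X Y E) cs"
    using card_sources_add_sinks_le_num_non_flow hasse_arc_asym[OF assms(1)] by blast
  ultimately show ?thesis by linarith
qed

end
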